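(* Let $\Gamma$ be a coordination population network game whose graph consists of a single star or of several disconnected stars, and let $\beta>0$, $\lambda\ge0$. Then (a) every orbit of the belief dynamics of homogeneous systems, $$\frac{d\mu_{is}}{dt}=\frac{f_{i,s}(\{\boldsymbol{\mu}_j\}_{j\in V_i})-\mu_{is}}{\lambda+t+1},\qquad i\in V,\ s\in S_i,$$ starting in $\prod_{i\in V}\Delta_i$, converges to the set of QRE of $\Gamma$; and (b) for any initial variances $\sigma^2_{js}\ge0$, every orbit of the mean belief dynamics of initially heterogeneous systems, $$\frac{d\bar{\mu}_{is}}{dt}=\frac{f_{i,s}(\bar{\boldsymbol{\mu}})-\bar{\mu}_{is}}{\lambda+t+1}+\frac{\sum_{j\in V_i}\sum_{s'\in S_j}\frac{\partial^2 f_{i,s}}{\partial\mu_{js'}^2}(\bar{\boldsymbol{\mu}})\,\big(\tfrac{\lambda+1}{\lambda+t+1}\big)^2\sigma^2_{js'}}{2(\lambda+t+1)},$$ starting from $\bar{\boldsymbol{\mu}}(0)\in\prod_{i\in V}\Delta_i$, converges to the set of QRE of $\Gamma$ (convergence to a set meaning that the distance from the orbit to that set tends to $0$ as $t\to\infty$).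
   Context: A population network game $\Gamma$ consists of a finite undirected graph with vertex set $V=\{1,\dots,n\}$ (populations) and edge set $E$; $V_i=\{j:\{i,j\}\in E\}$. Population $i$ has finite strategy set $S_i$, $\Delta_i\subset\mathbb{R}^{|S_i|}$ is the probability simplex, and each edge $\{i,j\}$ carries payoff matrices $\mathbf{A}_{ij}\in\mathbb{R}^{|S_i|\times|S_j|}$, $\mathbf{A}_{ji}\in\mathbb{R}^{|S_j|\times|S_i|}$. $\Gamma$ is a coordination game if $\mathbf{A}_{ij}=\mathbf{A}_{ji}^\top$ for every edge. The graph consists of a single or disconnected multiple stars if each connected component has a root vertex adjacent to all other vertices of the component and no other edges. The logit choice function is $f_{i,s}(\{\boldsymbol{\mu}_j\}_{j\in V_i})=\exp\big(\beta\sum_{j\in V_i}\mathbf{e}_s^\top\mathbf{A}_{ij}\boldsymbol{\mu}_j\big)/\sum_{s'\in S_i}\exp\big(\beta\sum_{j\in V_i}\mathbf{e}_{s'}^\top\mathbf{A}_{ij}\boldsymbol{\mu}_j\big)$ ($\mathbf{e}_s$ the $s$-th unit vector), viewed as a smooth function on $\prod_{j\in V_i}\mathbb{R}^{|S_j|}$; $f_{i,s}(\bar{\boldsymbol{\mu}})=f_{i,s}(\{\bar{\boldsymbol{\mu}}_j\}_{j\in V_i})$. A QRE is $\mathbf{x}^\ast\in\prod_i\Delta_i$ with $x^\ast_{is}=f_{i,s}(\{\mathbf{x}^\ast_j\}_{j\in V_i})$ for all $i,s$. In an initially heterogeneous system, $\bar{\boldsymbol{\mu}}_j$ is the mean belief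 about population $j$ across the system and $\sigma^2_{js'}$ is the initial variance of the belief component $\mu_{js'}$. *)

theory Defs
  imports "HOL-Analysis.Analysis"
begin

text \<open>Populations are 0..<n; population i has strategies 0..<m i.
  E is the (undirected) edge relation, A i j s s' the entry (s,s') of the
  payoff matrix A_ij. A (joint) belief/state is a function
  x :: nat \<Rightarrow> nat \<Rightarrow> real, x i s = component s of the vector for population i;
  only coordinates i<n, s<m i are meaningful.\<close>

type_synonym state = "nat \<Rightarrow> nat \<Rightarrow> real"

definition simple_graph :: "nat \<Rightarrow> (nat \<Rightarrow> nat \<Rightarrow> bool) \<Rightarrow> bool" where
  "simple_graph n E \<longleftrightarrow> (\<forall>i j. E i j \<longrightarrow> i < n \<and> j < n) \<and>
     (\<forall>i j. E i j \<longrightarrow> E j i) \<and> (\<forall>i. \<not> E i i)"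

definition nbrs :: "nat \<Rightarrow> (nat \<Rightarrow> nat \<Rightarrow> bool) \<Rightarrow> nat \<Rightarrow> nat set" where
  "nbrs n E i = {j. j < n \<and> E i j}"

definition reach :: "nat \<Rightarrow> (nat \<Rightarrow> nat \<Rightarrow> bool) \<Rightarrow> nat \<Rightarrow> nat \<Rightarrow> bool" where
  "reach n E = (\<lambda>a b. a < n \<and> b < n \<and> E a b)\<^sup>*\<^sup>*"

definition star_forest :: "nat \<Rightarrow> (nat \<Rightarrow> nat \<Rightarrow> bool) \<Rightarrow> bool" where
  "star_forest n E \<longleftrightarrow> (\<forall>v<n. \<exists>r. reach n E v r \<and>
      (\<forall>u. reach n E v u \<longrightarrow> u \<noteq> r \<longrightarrow> E r u) \<and>
      (\<forall>u w. reach n E v u \<longrightarrow> reach n E v w \<longrightarrow> E u w \<longrightarrow> u = r \<or> w = r))"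

definition coordination :: "nat \<Rightarrow> (nat \<Rightarrow> nat) \<Rightarrow> (nat \<Rightarrow> nat \<Rightarrow> bool)
    \<Rightarrow> (nat \<Rightarrow> nat \<Rightarrow> nat \<Rightarrow> nat \<Rightarrow> real) \<Rightarrow> bool" where
  "coordination n m E A \<longleftrightarrow> (\<forall>i j s s'. E i j \<longrightarrow> s < m i \<longrightarrow> s' < m j \<longrightarrow> A i j s s' = A j i s' s)"

definition payoff :: "nat \<Rightarrow> (nat \<Rightarrow> nat) \<Rightarrow> (nat \<Rightarrow> nat \<Rightarrow> bool)
    \<Rightarrow> (nat \<Rightarrow> nat \<Rightarrow> nat \<Rightarrow> nat \<Rightarrow> real) \<Rightarrow> nat \<Rightarrow> nat \<Rightarrow> state \<Rightarrow> real" where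
  "payoff n m E A i s mu = (\<Sum>j\<in>nbrs n E i. \<Sum>s'<m j. A i j s s' * mu j s')"

text \<open>Logit choice function f_{i,s}, as a function on all of the (unconstrained) state space.\<close>
definition logit :: "nat \<Rightarrow> (nat \<Rightarrow> nat) \<Rightarrow> (nat \<Rightarrow> nat \<Rightarrow> bool)
    \<Rightarrow> (nat \<Rightarrow> nat \<Rightarrow> nat \<Rightarrow> nat \<Rightarrow> real) \<Rightarrow> real \<Rightarrow> nat \<Rightarrow> nat \<Rightarrow> state \<Rightarrow> real" where
  "logit n m E A beta i s mu =
     exp (beta * payoff n m E A i s mu) / (\<Sum>t<m i. exp (beta * payoff n m E A i t mu))"

definition second_partial :: "(state \<Rightarrow> real) \<Rightarrow> nat \<Rightarrow> nat \<Rightarrow> state \<Rightarrow> real" where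
  "second_partial F j s' mu =
     deriv (\<lambda>h. deriv (\<lambda>k. F (mu(j := (mu j)(s' := k)))) h) (mu j s')"

definition prod_simplex :: "nat \<Rightarrow> (nat \<Rightarrow> nat) \<Rightarrow> state set" where
  "prod_simplex n m = {x. \<forall>i<n. (\<forall>s<m i. 0 \<le> x i s) \<and> (\<Sum>s<m i. x i s) = 1}"

definition QRE :: "nat \<Rightarrow> (nat \<Rightarrow> nat) \<Rightarrow> (nat \<Rightarrow> nat \<Rightarrow> bool)
    \<Rightarrow> (nat \<Rightarrow> nat \<Rightarrow> nat \<Rightarrow> nat \<Rightarrow> real) \<Rightarrow> real \<Rightarrow> state set" where
  "QRE n m E A beta = {x \<in> prod_simplex n m. \<forall>i<n. \<forall>s<m i. x i s = logit n m E A beta i s x}"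

definition sdist :: "nat \<Rightarrow> (nat \<Rightarrow> nat) \<Rightarrow> state \<Rightarrow> state \<Rightarrow> real" where
  "sdist n m x y = sqrt (\<Sum>i<n. \<Sum>s<m i. (x i s - y i s)\<^sup>2)"

definition sinfdist :: "nat \<Rightarrow> (nat \<Rightarrow> nat) \<Rightarrow> state \<Rightarrow> state set \<Rightarrow> real" where
  "sinfdist n m x Q = (INF q\<in>Q. sdist n m x q)"

definition homog_orbit :: "nat \<Rightarrow> (nat \<Rightarrow> nat) \<Rightarrow> (nat \<Rightarrow> nat \<Rightarrow> bool)
    \<Rightarrow> (nat \<Rightarrow> nat \<Rightarrow> nat \<Rightarrow> nat \<Rightarrow> real) \<Rightarrow> real \<Rightarrow> real \<Rightarrow> (real \<Rightarrow> state) \<Rightarrow> bool" where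
  "homog_orbit n m E A beta lam mu \<longleftrightarrow>
     (\<forall>t\<ge>0. \<forall>i<n. \<forall>s<m i.
        ((\<lambda>\<tau>. mu \<tau> i s) has_real_derivative
           (logit n m E A beta i s (mu t) - mu t i s) / (lam + t + 1)) (at t within {0..}))"

definition hetero_orbit :: "nat \<Rightarrow> (nat \<Rightarrow> nat) \<Rightarrow> (nat \<Rightarrow> nat \<Rightarrow> bool)
    \<Rightarrow> (nat \<Rightarrow> nat \<Rightarrow> nat \<Rightarrow> nat \<Rightarrow> real) \<Rightarrow> real \<Rightarrow> real \<Rightarrow> state \<Rightarrow> (real \<Rightarrow> state) \<Rightarrow> bool" where
  "hetero_orbit n m E A beta lam sigma2 mu \<longleftrightarrow>
     (\<forall>t\<ge>0. \<forall>i<n. \<forall>s<m i.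
        ((\<lambda>\<tau>. mu \<tau> i s) has_real_derivative
           (logit n m E A beta i s (mu t) - mu t i s) / (lam + t + 1)
           + (\<Sum>j\<in>nbrs n E i. \<Sum>s'<m j.
                second_partial (logit n m E A beta i s) j s' (mu t)
                * ((lam + 1) / (lam + t + 1))\<^sup>2 * sigma2 j s')
             / (2 * (lam + t + 1))) (at t within {0..}))"

end

theory Submission
  imports Defs
begin

text \<open>
  A coordination game has the potential
  \<open>L(x) = \<beta>/2 \<Sum>\<^sub>i x\<^sub>i \<cdot> payoff\<^sub>i(x) - \<Sum>\<^sub>i\<^sub>s x\<^sub>i\<^sub>s ln x\<^sub>i\<^sub>s\<close>,
  whose gradient is \<open>ln f(x) - ln x\<close> up to a constant on each population. Along the
  homogeneous dynamics this gives
  \<open>dL/dt = \<Sum> (f - x) (ln f - ln x) / (\<lambda> + t + 1) \<ge> \<Sum> (f - x)\<^sup>2 / (\<lambda> + t + 1)\<close>.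
  The heterogeneous correction sums to zero over every population and is
  \<open>O((\<lambda> + t + 1)\<^sup>-\<^sup>3)\<close>, since the second partial derivatives of the logit are bounded.
  Hence beliefs stay on the simplices and, after a settling time, away from their boundary,
  and \<open>L\<close> minus an \<open>O((\<lambda> + t + 1)\<^sup>-\<^sup>2)\<close> term is nondecreasing and bounded.
  During \<open>[t, t + \<delta> (\<lambda> + t + 1)]\<close> the orbit moves by \<open>O(\<delta>)\<close> while \<open>ln (\<lambda> + t + 1)\<close>
  grows by \<open>ln (1 + \<delta>)\<close>, so near a limit point that is not a QRE the potential would gain a
  fixed amount infinitely often. Thus all limit points are QRE, and compactness yields the
  convergence.
\<close>

lemma nondecreasing_if_deriv_nonneg:
  fixes f f' :: "real \<Rightarrow> real"
  assumes "a \<le> b"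
    and deriv: "\<And>t. a \<le> t \<Longrightarrow> t \<le> b \<Longrightarrow> (f has_real_derivative f' t) (at t within {a..b})"
    and nonneg: "\<And>t. a \<le> t \<Longrightarrow> t \<le> b \<Longrightarrow> 0 \<le> f' t"
  shows "f a \<le> f b"
proof (rule DERIV_nonneg_imp_increasing_open[OF \<open>a \<le> b\<close>])
  fix t assume t: "a < t" "t < b"
  then have "(f has_real_derivative f' t) (at t)"
    using deriv[of t] by (simp add: at_within_Icc_at)
  then show "\<exists>y. DERIV f t :> y \<and> 0 \<le> y" using nonneg[of t] t by auto
next
  show "continuous_on {a..b} f"
    using deriv by (intro DERIV_continuous_on) auto
qed

lemma sq_diff_le_diff_mult_ln_diff:
  fixes a b :: real
  assumes "0 < a" "a \<le> 1" "0 < b" "b \<le> 1"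
  shows "(a - b)\<^sup>2 \<le> (a - b) * (ln a - ln b)"
proof -
  have diff_le_ln_diff: "x - y \<le> ln x - ln y" if "0 < y" "y \<le> x" "x \<le> 1" for x y :: real
  proof -
    have "ln (y / x) \<le> y / x - 1" using that by (intro ln_le_minus_one) simp
    then have "(x - y) / x \<le> ln x - ln y" using that by (simp add: ln_div diff_divide_distrib)
    moreover have "x - y \<le> (x - y) / x" using that by (simp add: le_divide_eq mult_left_le)
    ultimately show ?thesis by linarith
  qed
  show ?thesis
  proof (cases "b \<le> a")
    case True
    then show ?thesis using diff_le_ln_diff[of b a] assms
      by (simp add: power2_eq_square mult_left_mono)
  next
    case False
    then have "(b - a) * (b - a) \<le> (b - a) * (ln b - ln a)"
      using diff_le_ln_diff[of a b] assms by (intro mult_left_mono) auto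
    then show ?thesis by (simp add: power2_eq_square algebra_simps)
  qed
qed

lemma x_ln_x_ge_minus_1:
  fixes x :: real
  assumes "0 < x"
  shows "- 1 \<le> x * ln x"
proof -
  have "ln (1 / x) \<le> 1 / x - 1" using assms by (intro ln_le_minus_one) simp
  then have "x * (- ln x) \<le> x * (1 / x - 1)" using assms by (intro mult_left_mono) (auto simp: ln_div)
  then show ?thesis using assms by (simp add: algebra_simps)
qed

lemma abs_weighted_sum_le:
  fixes p g :: "nat \<Rightarrow> real"
  assumes "\<And>r. r < M \<Longrightarrow> 0 \<le> p r" "(\<Sum>r<M. p r) = 1" "\<And>r. r < M \<Longrightarrow> \<bar>g r\<bar> \<le> K"
  shows "\<bar>\<Sum>r<M. g r * p r\<bar> \<le> K"
proof -
  have "\<bar>\<Sum>r<M. g r * p r\<bar> \<le> (\<Sum>r<M. K * p r)"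
    using assms(1,3) by (intro order.trans[OF sum_abs] sum_mono) (simp add: abs_mult mult_right_mono)
  also have "\<dots> = K" using assms(2) by (simp add: sum_distrib_left[symmetric])
  finally show ?thesis .
qed

lemma bounded_family_convergent_subseq:
  fixes X :: "nat \<Rightarrow> 'a \<Rightarrow> real"
  assumes "finite I" and "\<And>k p. p \<in> I \<Longrightarrow> \<bar>X k p\<bar> \<le> B"
  shows "\<exists>r. strict_mono r \<and> (\<forall>p\<in>I. convergent (\<lambda>k. X (r k) p))"
  using assms
proof (induction I rule: finite_induct)
  case empty
  show ?case using strict_mono_id by blast
next
  case (insert p I)
  then obtain r where r: "strict_mono r" "\<forall>q\<in>I. convergent (\<lambda>k. X (r k) q)" by auto
  have "bounded (range (\<lambda>k. X (r k) p))"
    unfolding bounded_iff using insert.prems by auto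
  then obtain l r' where r': "strict_mono r'" "((\<lambda>k. X (r k) p) \<circ> r') \<longlonglongrightarrow> l"
    using bounded_imp_convergent_subsequence by blast
  have "convergent (\<lambda>k. X (r (r' k)) q)" if "q \<in> insert p I" for q
  proof (cases "q = p")
    case True
    then show ?thesis using r'(2) by (auto simp: convergent_def o_def)
  next
    case False
    then show ?thesis
      using convergent_subseq_convergent[OF _ r'(1), of "\<lambda>k. X (r k) q"] r(2) that by (auto simp: o_def)
  qed
  then show ?case using strict_mono_o[OF r(1) r'(1)] by (auto simp: o_def)
qed

lemma eventually_small_increments_if_mono_bounded:
  fixes f :: "real \<Rightarrow> real"
  assumes mono: "\<And>u v. t\<^sub>0 \<le> u \<Longrightarrow> u \<le> v \<Longrightarrow> f u \<le> f v"
    and bounded: "\<And>t. t\<^sub>0 \<le> t \<Longrightarrow> f t \<le> B" and "0 < G"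
  obtains t where "t\<^sub>0 \<le> t" "\<And>u v. t \<le> u \<Longrightarrow> u \<le> v \<Longrightarrow> f v < f u + G"
proof -
  define S where "S = (SUP t\<in>{t\<^sub>0..}. f t)"
  have bdd: "bdd_above (f ` {t\<^sub>0..})" using bounded by (intro bdd_aboveI2) auto
  obtain t where t: "t\<^sub>0 \<le> t" "S - G < f t"
    using less_cSUP_iff[OF _ bdd, of "S - G"] \<open>0 < G\<close> unfolding S_def by force
  have "f v < f u + G" if "t \<le> u" "u \<le> v" for u v
  proof -
    have "f v \<le> S" unfolding S_def using t that by (intro cSUP_upper bdd) auto
    moreover have "f t \<le> f u" using mono t that by simp
    ultimately show ?thesis using t by linarith
  qed
  then show thesis using that t by blast
qed

lemma has_real_derivative_half_inverse_square:
  fixes x c :: real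
  assumes "0 < x"
  shows "((\<lambda>y. c / (2 * y\<^sup>2)) has_real_derivative - c / x ^ 3) (at x)"
  using assms by (auto intro!: derivative_eq_intros simp: power2_eq_square power3_eq_cube field_simps)

section \<open>Logit probabilities along a coordinate line\<close>

text \<open>The logit probabilities as functions of a single belief coordinate \<open>k\<close>,
  on which every payoff depends affinely.\<close>

definition softmax_line :: "nat \<Rightarrow> real \<Rightarrow> (nat \<Rightarrow> real) \<Rightarrow> (nat \<Rightarrow> real) \<Rightarrow> nat \<Rightarrow> real \<Rightarrow> real" where
  "softmax_line M b c a s k = exp (b * (c s + a s * k)) / (\<Sum>r<M. exp (b * (c r + a r * k)))"

definition softmax_line_mean :: "nat \<Rightarrow> real \<Rightarrow> (nat \<Rightarrow> real) \<Rightarrow> (nat \<Rightarrow> real) \<Rightarrow> real \<Rightarrow> real" where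
  "softmax_line_mean M b c a k = (\<Sum>r<M. a r * softmax_line M b c a r k)"

definition softmax_line_deriv2 :: "nat \<Rightarrow> real \<Rightarrow> (nat \<Rightarrow> real) \<Rightarrow> (nat \<Rightarrow> real) \<Rightarrow> nat \<Rightarrow> real \<Rightarrow> real" where
  "softmax_line_deriv2 M b c a s k = b\<^sup>2 * softmax_line M b c a s k *
     ((a s - softmax_line_mean M b c a k)\<^sup>2
      - (\<Sum>r<M. a r * softmax_line M b c a r k * (a r - softmax_line_mean M b c a k)))"

context
  fixes M :: nat and b :: real and c a :: "nat \<Rightarrow> real"
  assumes M_pos: "0 < M"
begin

private abbreviation (input) "p \<equiv> softmax_line M b c a"
private abbreviation (input) "mean \<equiv> softmax_line_mean M b c a"

lemma softmax_line_denom_pos: "0 < (\<Sum>r<M. exp (b * (c r + a r * k)))"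
  using M_pos by (intro sum_pos) auto

lemma softmax_line_pos: "0 < p s k"
  unfolding softmax_line_def using softmax_line_denom_pos by simp

lemma sum_softmax_line: "(\<Sum>s<M. p s k) = 1"
  unfolding softmax_line_def using softmax_line_denom_pos[of k]
  by (simp add: sum_divide_distrib[symmetric])

lemma has_real_derivative_softmax_line:
  "(p s has_real_derivative b * p s k * (a s - mean k)) (at k)"
proof -
  let ?w = "\<lambda>r k. exp (b * (c r + a r * k))"
  let ?Z = "\<lambda>k. \<Sum>r<M. ?w r k"
  have Z_pos: "0 < ?Z k" by (rule softmax_line_denom_pos)
  have "((\<lambda>k. ?w s k / ?Z k) has_real_derivative
      (?w s k * (b * a s) * ?Z k - ?w s k * (\<Sum>r<M. ?w r k * (b * a r))) / (?Z k * ?Z k)) (at k)"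
    using Z_pos by (intro DERIV_divide DERIV_sum) (auto intro!: derivative_eq_intros)
  moreover have "mean k = (\<Sum>r<M. ?w r k * a r) / ?Z k"
    unfolding softmax_line_mean_def softmax_line_def by (simp add: sum_divide_distrib mult.commute)
  then have "(?w s k * (b * a s) * ?Z k - ?w s k * (\<Sum>r<M. ?w r k * (b * a r))) / (?Z k * ?Z k)
      = b * p s k * (a s - mean k)"
    using Z_pos by (simp add: softmax_line_def sum_distrib_left[symmetric] mult_ac field_simps)
  ultimately show ?thesis by (simp add: softmax_line_def[abs_def])
qed

lemma has_real_derivative_softmax_line_mean:
  "(mean has_real_derivative (\<Sum>r<M. a r * (b * p r k * (a r - mean k)))) (at k)"
proof -
  have "((\<lambda>k. \<Sum>r<M. a r * p r k) has_real_derivative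
      (\<Sum>r<M. a r * (b * p r k * (a r - mean k)))) (at k)"
    by (intro DERIV_sum DERIV_cmult has_real_derivative_softmax_line)
  then show ?thesis by (simp add: softmax_line_mean_def[abs_def])
qed

lemma deriv2_softmax_line:
  "deriv (\<lambda>h. deriv (p s) h) k = softmax_line_deriv2 M b c a s k"
proof -
  have "deriv (p s) = (\<lambda>k. b * p s k * (a s - mean k))"
    using DERIV_imp_deriv[OF has_real_derivative_softmax_line] by auto
  moreover have "((\<lambda>k. b * p s k * (a s - mean k)) has_real_derivative
      b * (b * p s k * (a s - mean k)) * (a s - mean k)
      + (0 - (\<Sum>r<M. a r * (b * p r k * (a r - mean k)))) * (b * p s k)) (at k)"
    by (intro DERIV_mult DERIV_cmult DERIV_diff DERIV_const
        has_real_derivative_softmax_line has_real_derivative_softmax_line_mean)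
  ultimately show ?thesis
    by (simp add: DERIV_imp_deriv softmax_line_deriv2_def sum_distrib_left power2_eq_square algebra_simps)
qed

lemma sum_softmax_line_deriv2: "(\<Sum>s<M. softmax_line_deriv2 M b c a s k) = 0"
proof -
  let ?X = "\<Sum>r<M. a r * p r k * (a r - mean k)"
  have centered: "(\<Sum>s<M. p s k * (a s - mean k)) = 0"
    using sum_softmax_line[of k]
    by (simp add: softmax_line_mean_def right_diff_distrib sum_subtractf sum_distrib_right[symmetric] mult.commute)
  have "(\<Sum>s<M. p s k * (a s - mean k)\<^sup>2) = ?X - mean k * (\<Sum>s<M. p s k * (a s - mean k))"
    by (simp add: power2_eq_square sum_distrib_left sum_subtractf[symmetric] algebra_simps)
  then have "(\<Sum>s<M. p s k * ((a s - mean k)\<^sup>2 - ?X)) = 0"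
    using centered sum_softmax_line[of k]
    by (simp add: right_diff_distrib sum_subtractf sum_distrib_right[symmetric])
  then show ?thesis
    by (simp add: softmax_line_deriv2_def sum_distrib_left[symmetric] mult.assoc)
qed

lemma abs_softmax_line_deriv2_le:
  assumes "s < M" and a_bound: "\<And>r. r < M \<Longrightarrow> \<bar>a r\<bar> \<le> K"
  shows "\<bar>softmax_line_deriv2 M b c a s k\<bar> \<le> 6 * b\<^sup>2 * K\<^sup>2"
proof -
  have p_nonneg: "\<And>r. 0 \<le> p r k" using softmax_line_pos less_imp_le by blast
  have "p s k \<le> (\<Sum>r<M. p r k)"
    using \<open>s < M\<close> p_nonneg by (intro member_le_sum) auto
  then have p_le_1: "p s k \<le> 1" using sum_softmax_line by simp
  have "K \<ge> 0" using a_bound[OF M_pos] by linarith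
  have mean_bound: "\<bar>mean k\<bar> \<le> K"
    unfolding softmax_line_mean_def using abs_weighted_sum_le[OF p_nonneg sum_softmax_line a_bound]
    by (simp add: mult.commute)
  have deviation_bound: "\<bar>a r - mean k\<bar> \<le> 2 * K" if "r < M" for r
    using a_bound[OF that] mean_bound by linarith
  have "\<bar>a r * (a r - mean k)\<bar> \<le> 2 * K\<^sup>2" if "r < M" for r
  proof -
    have "\<bar>a r\<bar> * \<bar>a r - mean k\<bar> \<le> K * (2 * K)"
      using a_bound[OF that] deviation_bound[OF that] \<open>K \<ge> 0\<close> by (intro mult_mono) auto
    then show ?thesis by (simp add: abs_mult power2_eq_square)
  qed
  then have "\<bar>\<Sum>r<M. a r * (a r - mean k) * p r k\<bar> \<le> 2 * K\<^sup>2"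
    by (intro abs_weighted_sum_le[OF p_nonneg sum_softmax_line])
  moreover have "(\<Sum>r<M. a r * (a r - mean k) * p r k) = (\<Sum>r<M. a r * p r k * (a r - mean k))"
    by (simp add: mult_ac)
  moreover have "(a s - mean k)\<^sup>2 \<le> 4 * K\<^sup>2"
    using power_mono[OF deviation_bound[OF \<open>s < M\<close>] abs_ge_zero, of 2] by (simp add: power_mult_distrib)
  ultimately have "\<bar>(a s - mean k)\<^sup>2 - (\<Sum>r<M. a r * p r k * (a r - mean k))\<bar> \<le> 6 * K\<^sup>2"
    using zero_le_power2[of "a s - mean k"] unfolding abs_le_iff by linarith
  then have "p s k * \<bar>(a s - mean k)\<^sup>2 - (\<Sum>r<M. a r * p r k * (a r - mean k))\<bar> \<le> 1 * (6 * K\<^sup>2)"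
    using p_le_1 p_nonneg by (intro mult_mono) auto
  then have "b\<^sup>2 * (p s k * \<bar>(a s - mean k)\<^sup>2 - (\<Sum>r<M. a r * p r k * (a r - mean k))\<bar>)
      \<le> b\<^sup>2 * (6 * K\<^sup>2)"
    by (intro mult_left_mono) auto
  then show ?thesis
    using p_nonneg by (simp add: softmax_line_deriv2_def abs_mult mult_ac)
qed

end

lemma finite_nbrs [simp]: "finite (nbrs n E i)"
  unfolding nbrs_def by auto

definition payoff_partial :: "nat \<Rightarrow> (nat \<Rightarrow> nat) \<Rightarrow> (nat \<Rightarrow> nat \<Rightarrow> bool)
    \<Rightarrow> (nat \<Rightarrow> nat \<Rightarrow> nat \<Rightarrow> nat \<Rightarrow> real) \<Rightarrow> nat \<Rightarrow> nat \<Rightarrow> nat \<Rightarrow> nat \<Rightarrow> real" where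
  "payoff_partial n m E A i t j s' = (if j \<in> nbrs n E i \<and> s' < m j then A i j t s' else 0)"

lemma payoff_update:
  "payoff n m E A i t (x(j := (x j)(s' := k))) =
     payoff n m E A i t x + payoff_partial n m E A i t j s' * (k - x j s')"
proof -
  have update: "x(j := (x j)(s' := k)) = (\<lambda>j' s''. x j' s'' + (if j' = j \<and> s'' = s' then k - x j s' else 0))"
    by (simp add: fun_eq_iff)
  have inner: "(\<Sum>s''<m j'. A i j' t s'' * (if j' = j \<and> s'' = s' then k - x j s' else 0))
      = (if j' = j \<and> s' < m j then A i j t s' * (k - x j s') else 0)" for j'
    by (cases "j' = j") (simp_all add: if_distrib[of "(*) _"] sum.delta' cong: if_cong)
  have "(\<Sum>j'\<in>nbrs n E i. \<Sum>s''<m j'. A i j' t s'' * (if j' = j \<and> s'' = s' then k - x j s' else 0))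
      = payoff_partial n m E A i t j s' * (k - x j s')"
    unfolding inner payoff_partial_def by (cases "s' < m j") (simp_all add: sum.delta')
  then show ?thesis
    unfolding payoff_def update by (simp add: distrib_left sum.distrib)
qed

lemma logit_update:
  "logit n m E A beta i s (x(j := (x j)(s' := k))) =
     softmax_line (m i) beta (\<lambda>t. payoff n m E A i t x - payoff_partial n m E A i t j s' * x j s')
       (\<lambda>t. payoff_partial n m E A i t j s') s k"
  unfolding logit_def softmax_line_def payoff_update by (simp add: algebra_simps)

lemma second_partial_logit:
  assumes "0 < m i"
  shows "second_partial (logit n m E A beta i s) j s' x =
     softmax_line_deriv2 (m i) beta (\<lambda>t. payoff n m E A i t x - payoff_partial n m E A i t j s' * x j s')
       (\<lambda>t. payoff_partial n m E A i t j s') s (x j s')"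
  using deriv2_softmax_line[OF assms] by (simp add: second_partial_def logit_update)

lemma prod_simplex_bounds:
  assumes "x \<in> prod_simplex n m" "i < n" "s < m i"
  shows "0 \<le> x i s" "x i s \<le> 1"
proof -
  have nonneg: "\<forall>s<m i. 0 \<le> x i s" and sum: "(\<Sum>s<m i. x i s) = 1"
    using assms(1,2) unfolding prod_simplex_def by auto
  show "0 \<le> x i s" using nonneg assms(3) by simp
  have "x i s \<le> (\<Sum>s<m i. x i s)" using nonneg assms(3) by (intro member_le_sum) auto
  then show "x i s \<le> 1" using sum by simp
qed

lemma prod_simplex_limit:
  assumes "\<And>k. z k \<in> prod_simplex n m"
    and lim: "\<And>i s. i < n \<Longrightarrow> s < m i \<Longrightarrow> (\<lambda>k. z k i s) \<longlonglongrightarrow> x i s"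
  shows "x \<in> prod_simplex n m"
  unfolding prod_simplex_def
proof (intro CollectI allI impI conjI)
  fix i s assume "i < n" "s < m i"
  then show "0 \<le> x i s"
    using prod_simplex_bounds(1)[OF assms(1)] by (intro LIMSEQ_le_const[OF lim]) auto
next
  fix i assume "i < n"
  then have "(\<lambda>k. \<Sum>s<m i. z k i s) \<longlonglongrightarrow> (\<Sum>s<m i. x i s)"
    by (intro tendsto_sum lim) auto
  moreover have "(\<lambda>k. \<Sum>s<m i. z k i s) = (\<lambda>k. 1)"
    using assms(1) \<open>i < n\<close> unfolding prod_simplex_def by auto
  ultimately show "(\<Sum>s<m i. x i s) = 1" using LIMSEQ_unique tendsto_const by metis
qed

lemma sdist_nonneg: "0 \<le> sdist n m x y"
  unfolding sdist_def by (intro real_sqrt_ge_zero sum_nonneg) auto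

lemma sinfdist_le_sdist: "q \<in> Q \<Longrightarrow> sinfdist n m x Q \<le> sdist n m x q"
  unfolding sinfdist_def by (rule cINF_lower) (auto intro: bdd_belowI[where m = 0] sdist_nonneg)

lemma sinfdist_nonneg: "Q \<noteq> {} \<Longrightarrow> 0 \<le> sinfdist n m x Q"
  unfolding sinfdist_def by (rule cINF_greatest) (auto intro: sdist_nonneg)

lemma sdist_tendsto_0:
  assumes "\<And>i s. i < n \<Longrightarrow> s < m i \<Longrightarrow> (\<lambda>k. z k i s) \<longlonglongrightarrow> x i s"
  shows "(\<lambda>k. sdist n m (z k) x) \<longlonglongrightarrow> 0"
proof -
  have "(\<lambda>k. sdist n m (z k) x) \<longlonglongrightarrow> sqrt (\<Sum>i<n. \<Sum>s<m i. (x i s - x i s)\<^sup>2)"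
    unfolding sdist_def using assms by (intro tendsto_intros) auto
  then show ?thesis by simp
qed

lemma eventually_coordinates_close:
  fixes z :: "nat \<Rightarrow> state" and x :: state and \<eta> :: real
  assumes lim: "\<And>i s. i < n \<Longrightarrow> s < m i \<Longrightarrow> (\<lambda>k. z k i s) \<longlonglongrightarrow> x i s" and "0 < \<eta>"
  shows "\<forall>\<^sub>F k in sequentially. \<forall>i<n. \<forall>s<m i. \<bar>z k i s - x i s\<bar> < \<eta>"
proof -
  have "\<forall>\<^sub>F k in sequentially. \<forall>i\<in>{..<n}. \<forall>s\<in>{..<m i}. \<bar>z k i s - x i s\<bar> < \<eta>"
  proof (intro eventually_ball_finite ballI)
    fix i s assume "i \<in> {..<n}" "s \<in> {..<m i}"
    then have "(\<lambda>k. z k i s) \<longlonglongrightarrow> x i s" using lim by simp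
    from tendstoD[OF this \<open>0 < \<eta>\<close>]
    show "\<forall>\<^sub>F k in sequentially. \<bar>z k i s - x i s\<bar> < \<eta>" by (simp add: dist_real_def)
  qed simp_all
  then show ?thesis by (rule eventually_mono) simp
qed

section \<open>Coordination games and their potential\<close>

locale coordination_game =
  fixes n :: nat and m :: "nat \<Rightarrow> nat" and E :: "nat \<Rightarrow> nat \<Rightarrow> bool"
    and A :: "nat \<Rightarrow> nat \<Rightarrow> nat \<Rightarrow> nat \<Rightarrow> real" and beta :: real
  assumes simple: "simple_graph n E"
    and strategies_nonempty: "\<And>i. i < n \<Longrightarrow> 0 < m i"
    and coordination: "coordination n m E A"
    and beta_pos: "0 < beta"
    and populations_nonempty: "0 < n"
begin

definition A_norm :: real where
  "A_norm = (\<Sum>i<n. \<Sum>s<m i. \<Sum>j<n. \<Sum>s'<m j. \<bar>A i j s s'\<bar>)"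

definition strategy_count :: real where
  "strategy_count = (\<Sum>i<n. real (m i))"

definition payoff_form :: "state \<Rightarrow> state \<Rightarrow> real" where
  "payoff_form x y = (\<Sum>i<n. \<Sum>s<m i. x i s * payoff n m E A i s y)"

definition neg_entropy :: "state \<Rightarrow> real" where
  "neg_entropy x = (\<Sum>i<n. \<Sum>s<m i. x i s * ln (x i s))"

definition potential :: "state \<Rightarrow> real" where
  "potential x = beta / 2 * payoff_form x x - neg_entropy x"

definition logit_gap :: "state \<Rightarrow> real" where
  "logit_gap x = (\<Sum>i<n. \<Sum>s<m i. (logit n m E A beta i s x - x i s)\<^sup>2)"

lemma nbrs_less: "j \<in> nbrs n E i \<Longrightarrow> j < n"
  unfolding nbrs_def by simp

lemma row_sum_le_A_norm:
  assumes "i < n" "s < m i"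
  shows "(\<Sum>j<n. \<Sum>s'<m j. \<bar>A i j s s'\<bar>) \<le> A_norm"
proof -
  have "(\<Sum>j<n. \<Sum>s'<m j. \<bar>A i j s s'\<bar>) \<le> (\<Sum>s<m i. \<Sum>j<n. \<Sum>s'<m j. \<bar>A i j s s'\<bar>)"
    using assms(2) by (intro member_le_sum[where f = "\<lambda>s. \<Sum>j<n. \<Sum>s'<m j. \<bar>A i j s s'\<bar>"] sum_nonneg) auto
  also have "\<dots> \<le> A_norm"
    unfolding A_norm_def using assms(1) by (intro member_le_sum sum_nonneg) auto
  finally show ?thesis .
qed

lemma abs_A_le_A_norm:
  assumes "i < n" "s < m i" "j < n" "s' < m j"
  shows "\<bar>A i j s s'\<bar> \<le> A_norm"
proof -
  have "\<bar>A i j s s'\<bar> \<le> (\<Sum>s'<m j. \<bar>A i j s s'\<bar>)"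
    using assms(4) by (intro member_le_sum) auto
  also have "\<dots> \<le> (\<Sum>j<n. \<Sum>s'<m j. \<bar>A i j s s'\<bar>)"
    using assms(3) by (intro member_le_sum[where f = "\<lambda>j. \<Sum>s'<m j. \<bar>A i j s s'\<bar>"] sum_nonneg) auto
  also have "\<dots> \<le> A_norm" by (rule row_sum_le_A_norm[OF assms(1,2)])
  finally show ?thesis .
qed

lemma A_norm_nonneg: "0 \<le> A_norm"
  unfolding A_norm_def by (intro sum_nonneg) auto

lemma strategy_count_ge_1: "1 \<le> strategy_count"
proof -
  have "real (m 0) \<le> strategy_count"
    unfolding strategy_count_def using populations_nonempty by (intro member_le_sum) auto
  then show ?thesis using strategies_nonempty[OF populations_nonempty] by linarith
qed

lemma m_le_strategy_count: "i < n \<Longrightarrow> real (m i) \<le> strategy_count"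
  unfolding strategy_count_def by (intro member_le_sum) auto

lemma logit_denom_pos: "i < n \<Longrightarrow> 0 < (\<Sum>t<m i. exp (beta * payoff n m E A i t x))"
  using strategies_nonempty by (intro sum_pos) auto

lemma logit_pos: "i < n \<Longrightarrow> 0 < logit n m E A beta i s x"
  unfolding logit_def using logit_denom_pos by simp

lemma sum_logit: "i < n \<Longrightarrow> (\<Sum>s<m i. logit n m E A beta i s x) = 1"
  unfolding logit_def using logit_denom_pos[of i x] by (simp add: sum_divide_distrib[symmetric])

lemma logit_le_1:
  assumes "i < n" "s < m i"
  shows "logit n m E A beta i s x \<le> 1"
proof -
  have "logit n m E A beta i s x \<le> (\<Sum>s<m i. logit n m E A beta i s x)"
    using assms by (intro member_le_sum) (auto intro: less_imp_le logit_pos)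
  then show ?thesis using sum_logit[OF assms(1)] by simp
qed

lemma ln_logit:
  "i < n \<Longrightarrow> ln (logit n m E A beta i s x) =
     beta * payoff n m E A i s x - ln (\<Sum>t<m i. exp (beta * payoff n m E A i t x))"
  unfolding logit_def using logit_denom_pos[of i x] by (simp add: ln_div)

lemma abs_payoff_le:
  assumes "i < n" "s < m i" and x_bound: "\<And>j s'. j < n \<Longrightarrow> s' < m j \<Longrightarrow> \<bar>x j s'\<bar> \<le> B"
  shows "\<bar>payoff n m E A i s x\<bar> \<le> A_norm * B"
proof -
  have "0 \<le> B" using x_bound[of 0 0] populations_nonempty strategies_nonempty by force
  have "\<bar>payoff n m E A i s x\<bar> \<le> (\<Sum>j\<in>nbrs n E i. \<Sum>s'<m j. \<bar>A i j s s'\<bar> * B)"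
    unfolding payoff_def using x_bound nbrs_less
    by (intro order.trans[OF sum_abs] sum_mono order.trans[OF sum_abs])
       (simp add: abs_mult mult_left_mono)
  also have "\<dots> \<le> (\<Sum>j<n. \<Sum>s'<m j. \<bar>A i j s s'\<bar> * B)"
    using nbrs_less \<open>0 \<le> B\<close> by (intro sum_mono2) (auto intro: sum_nonneg)
  also have "\<dots> \<le> A_norm * B"
    using row_sum_le_A_norm[OF assms(1,2)] \<open>0 \<le> B\<close>
    by (simp add: sum_distrib_right[symmetric] mult_right_mono)
  finally show ?thesis .
qed

lemma logit_ge:
  assumes "i < n" "s < m i" and x_bound: "\<And>j s'. j < n \<Longrightarrow> s' < m j \<Longrightarrow> \<bar>x j s'\<bar> \<le> B"
  shows "exp (- 2 * beta * A_norm * B) / strategy_count \<le> logit n m E A beta i s x"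
proof -
  have payoff_bounds: "- (A_norm * B) \<le> payoff n m E A i t x \<and> payoff n m E A i t x \<le> A_norm * B"
    if "t < m i" for t
    using abs_payoff_le[of i t x B, OF assms(1) that x_bound] by (simp add: abs_le_iff)
  have "exp (- 2 * beta * A_norm * B) / strategy_count
      = exp (beta * - (A_norm * B)) / (strategy_count * exp (beta * (A_norm * B)))"
    by (simp add: exp_minus field_simps exp_add[symmetric])
  also have "\<dots> \<le> exp (beta * payoff n m E A i s x) / (strategy_count * exp (beta * (A_norm * B)))"
    using mult_left_mono[of "- (A_norm * B)" "payoff n m E A i s x" beta] payoff_bounds[OF assms(2)]
      beta_pos strategy_count_ge_1
    by (intro divide_right_mono) auto
  also have "\<dots> \<le> exp (beta * payoff n m E A i s x) / (real (m i) * exp (beta * (A_norm * B)))"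
    using m_le_strategy_count[OF assms(1)] strategies_nonempty[OF assms(1)]
    by (intro divide_left_mono mult_right_mono) auto
  also have "\<dots> \<le> logit n m E A beta i s x"
  proof -
    have "(\<Sum>t<m i. exp (beta * payoff n m E A i t x)) \<le> (\<Sum>t<m i. exp (beta * (A_norm * B)))"
      using payoff_bounds beta_pos by (intro sum_mono) auto
    then show ?thesis
      unfolding logit_def using logit_denom_pos[OF assms(1), of x] strategies_nonempty[OF assms(1)]
      by (intro divide_left_mono) auto
  qed
  finally show ?thesis .
qed

lemma sum_second_partial_logit:
  "i < n \<Longrightarrow> (\<Sum>s<m i. second_partial (logit n m E A beta i s) j s' x) = 0"
  using sum_softmax_line_deriv2 by (simp add: second_partial_logit strategies_nonempty)

lemma abs_second_partial_logit_le:
  assumes "i < n" "s < m i"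
  shows "\<bar>second_partial (logit n m E A beta i s) j s' x\<bar> \<le> 6 * beta\<^sup>2 * A_norm\<^sup>2"
  unfolding second_partial_logit[where m = m and i = i, OF strategies_nonempty[OF assms(1)]]
  using assms A_norm_nonneg
  by (intro abs_softmax_line_deriv2_le strategies_nonempty)
     (auto simp: payoff_partial_def intro: abs_A_le_A_norm dest: nbrs_less)

lemma payoff_form_sym: "payoff_form x y = payoff_form y x"
proof -
  have expand: "payoff_form x y = (\<Sum>i<n. \<Sum>j<n.
      if E i j then \<Sum>s<m i. \<Sum>s'<m j. x i s * A i j s s' * y j s' else 0)" for x y
  proof -
    have "payoff_form x y = (\<Sum>i<n. \<Sum>s<m i. \<Sum>j\<in>nbrs n E i. \<Sum>s'<m j. x i s * A i j s s' * y j s')"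
      unfolding payoff_form_def payoff_def by (simp add: sum_distrib_left mult.assoc)
    also have "\<dots> = (\<Sum>i<n. \<Sum>j\<in>nbrs n E i. \<Sum>s<m i. \<Sum>s'<m j. x i s * A i j s s' * y j s')"
      by (rule sum.cong[OF refl]) (rule sum.swap)
    also have "\<dots> = (\<Sum>i<n. \<Sum>j\<in>{j \<in> {..<n}. E i j}. \<Sum>s<m i. \<Sum>s'<m j. x i s * A i j s s' * y j s')"
      by (simp add: nbrs_def)
    finally show ?thesis by (simp only: sum.inter_filter[OF finite_lessThan])
  qed
  have "payoff_form y x = (\<Sum>j<n. \<Sum>i<n.
      if E i j then \<Sum>s'<m i. \<Sum>s<m j. y i s' * A i j s' s * x j s else 0)"
    unfolding expand by (rule sum.swap)
  also have "\<dots> = (\<Sum>j<n. \<Sum>i<n.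
      if E j i then \<Sum>s<m j. \<Sum>s'<m i. x j s * A j i s s' * y i s' else 0)"
  proof (intro sum.cong refl)
    fix j i
    show "(if E i j then \<Sum>s'<m i. \<Sum>s<m j. y i s' * A i j s' s * x j s else 0)
        = (if E j i then \<Sum>s<m j. \<Sum>s'<m i. x j s * A j i s s' * y i s' else 0)"
    proof (cases "E i j")
      case True
      then have "A i j s' s = A j i s s'" if "s < m j" "s' < m i" for s s'
        using coordination that unfolding coordination_def by blast
      then show ?thesis
        using True simple unfolding simple_graph_def
        by (subst sum.swap) (auto intro!: sum.cong simp: mult_ac)
    next
      case False
      then show ?thesis using simple unfolding simple_graph_def by auto
    qed
  qed
  also have "\<dots> = payoff_form x y" unfolding expand ..
  finally show ?thesis by simp
qed

lemma has_real_derivative_payoff_form_diag: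
  assumes deriv: "\<And>i s. i < n \<Longrightarrow> s < m i \<Longrightarrow> ((\<lambda>\<tau>. x \<tau> i s) has_real_derivative x' i s) (at t)"
  shows "((\<lambda>\<tau>. payoff_form (x \<tau>) (x \<tau>)) has_real_derivative 2 * payoff_form x' (x t)) (at t)"
proof -
  have payoff_deriv: "((\<lambda>\<tau>. payoff n m E A i s (x \<tau>)) has_real_derivative payoff n m E A i s x') (at t)"
    for i s
    unfolding payoff_def by (intro DERIV_sum DERIV_cmult deriv) (auto dest: nbrs_less)
  have "((\<lambda>\<tau>. payoff_form (x \<tau>) (x \<tau>)) has_real_derivative
      (\<Sum>i<n. \<Sum>s<m i. x' i s * payoff n m E A i s (x t) + payoff n m E A i s x' * x t i s)) (at t)"
    unfolding payoff_form_def by (intro DERIV_sum DERIV_mult deriv payoff_deriv) auto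
  also have "(\<Sum>i<n. \<Sum>s<m i. x' i s * payoff n m E A i s (x t) + payoff n m E A i s x' * x t i s)
      = payoff_form x' (x t) + payoff_form (x t) x'"
    unfolding payoff_form_def sum.distrib by (simp add: mult.commute)
  finally show ?thesis using payoff_form_sym[of "x t" x'] by simp
qed

lemma has_real_derivative_potential:
  assumes deriv: "\<And>i s. i < n \<Longrightarrow> s < m i \<Longrightarrow> ((\<lambda>\<tau>. x \<tau> i s) has_real_derivative x' i s) (at t)"
    and pos: "\<And>i s. i < n \<Longrightarrow> s < m i \<Longrightarrow> 0 < x t i s"
    and tangent: "\<And>i. i < n \<Longrightarrow> (\<Sum>s<m i. x' i s) = 0"
  shows "((\<lambda>\<tau>. potential (x \<tau>)) has_real_derivative
           (\<Sum>i<n. \<Sum>s<m i. x' i s * (ln (logit n m E A beta i s (x t)) - ln (x t i s)))) (at t)"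
proof -
  let ?Z = "\<lambda>i. \<Sum>r<m i. exp (beta * payoff n m E A i r (x t))"
  have form_deriv:
    "((\<lambda>\<tau>. payoff_form (x \<tau>) (x \<tau>)) has_real_derivative 2 * payoff_form x' (x t)) (at t)"
    using deriv by (rule has_real_derivative_payoff_form_diag)
  have entropy_deriv: "((\<lambda>\<tau>. neg_entropy (x \<tau>)) has_real_derivative
      (\<Sum>i<n. \<Sum>s<m i. x' i s * (ln (x t i s) + 1))) (at t)"
  proof -
    have "((\<lambda>\<tau>. x \<tau> i s * ln (x \<tau> i s)) has_real_derivative x' i s * (ln (x t i s) + 1)) (at t)"
      if "i < n" "s < m i" for i s
      using deriv[OF that] pos[OF that] by (auto intro!: derivative_eq_intros simp: field_simps)
    then show ?thesis unfolding neg_entropy_def by (intro DERIV_sum) auto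
  qed
  have "((\<lambda>\<tau>. potential (x \<tau>)) has_real_derivative
      beta / 2 * (2 * payoff_form x' (x t)) - (\<Sum>i<n. \<Sum>s<m i. x' i s * (ln (x t i s) + 1))) (at t)"
    unfolding potential_def by (intro DERIV_diff DERIV_cmult form_deriv entropy_deriv)
  also have "beta / 2 * (2 * payoff_form x' (x t)) - (\<Sum>i<n. \<Sum>s<m i. x' i s * (ln (x t i s) + 1))
      = (\<Sum>i<n. \<Sum>s<m i. x' i s * (ln (logit n m E A beta i s (x t)) - ln (x t i s))
           + x' i s * (ln (?Z i) - 1))"
    unfolding payoff_form_def sum_distrib_left sum_subtractf[symmetric]
    by (intro sum.cong refl) (simp add: ln_logit algebra_simps)
  also have "\<dots> = (\<Sum>i<n. \<Sum>s<m i. x' i s * (ln (logit n m E A beta i s (x t)) - ln (x t i s)))"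
  proof -
    have "(\<Sum>s<m i. x' i s * (ln (?Z i) - 1)) = 0" if "i < n" for i
      using tangent[OF that] by (simp add: sum_distrib_right[symmetric])
    then show ?thesis by (simp add: sum.distrib)
  qed
  finally show ?thesis .
qed

lemma payoff_tendsto:
  assumes "\<And>j s. j < n \<Longrightarrow> s < m j \<Longrightarrow> (\<lambda>k. z k j s) \<longlonglongrightarrow> x j s"
  shows "(\<lambda>k. payoff n m E A i s (z k)) \<longlonglongrightarrow> payoff n m E A i s x"
  unfolding payoff_def using assms by (intro tendsto_intros) (auto dest: nbrs_less)

lemma logit_tendsto:
  assumes "\<And>j s. j < n \<Longrightarrow> s < m j \<Longrightarrow> (\<lambda>k. z k j s) \<longlonglongrightarrow> x j s" and "i < n"
  shows "(\<lambda>k. logit n m E A beta i s (z k)) \<longlonglongrightarrow> logit n m E A beta i s x"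
  unfolding logit_def using assms logit_denom_pos[of i x]
  by (intro tendsto_intros payoff_tendsto) auto

lemma logit_gap_tendsto:
  assumes "\<And>j s. j < n \<Longrightarrow> s < m j \<Longrightarrow> (\<lambda>k. z k j s) \<longlonglongrightarrow> x j s"
  shows "(\<lambda>k. logit_gap (z k)) \<longlonglongrightarrow> logit_gap x"
  unfolding logit_gap_def using assms by (intro tendsto_intros logit_tendsto) auto

lemma logit_gap_nonneg: "0 \<le> logit_gap x"
  unfolding logit_gap_def by (intro sum_nonneg) auto

lemma logit_gap_ge_near:
  assumes "e < logit_gap x"
  shows "\<exists>\<eta>>0. \<forall>z. (\<forall>i<n. \<forall>s<m i. \<bar>z i s - x i s\<bar> \<le> \<eta>) \<longrightarrow> e \<le> logit_gap z"
proof (rule ccontr)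
  assume "\<not> ?thesis"
  then have "\<forall>k::nat. \<exists>z. (\<forall>i<n. \<forall>s<m i. \<bar>z i s - x i s\<bar> \<le> inverse (real (Suc k))) \<and> logit_gap z < e"
    by (metis not_le of_nat_0_less_iff positive_imp_inverse_positive zero_less_Suc)
  then obtain z where
    close: "\<And>k i s. i < n \<Longrightarrow> s < m i \<Longrightarrow> \<bar>z k i s - x i s\<bar> \<le> inverse (real (Suc k))"
    and small: "\<And>k. logit_gap (z k) < e"
    by metis
  have "(\<lambda>k. z k i s) \<longlonglongrightarrow> x i s" if "i < n" "s < m i" for i s
  proof -
    have "(\<lambda>k. z k i s - x i s) \<longlonglongrightarrow> 0"
      using close[OF that] by (intro Lim_null_comparison[OF _ LIMSEQ_inverse_real_of_nat]) simp
    then show ?thesis by (simp add: LIM_zero_iff)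
  qed
  then have "(\<lambda>k. logit_gap (z k)) \<longlonglongrightarrow> logit_gap x" by (rule logit_gap_tendsto)
  then have "logit_gap x \<le> e"
    using small by (intro LIMSEQ_le_const2) (auto intro: less_imp_le)
  then show False using assms by simp
qed

lemma QRE_if_logit_gap_eq_0:
  assumes "x \<in> prod_simplex n m" "logit_gap x = 0"
  shows "x \<in> QRE n m E A beta"
proof -
  have "\<forall>i\<in>{..<n}. \<forall>s\<in>{..<m i}. (logit n m E A beta i s x - x i s)\<^sup>2 = 0"
    using assms(2) unfolding logit_gap_def by (simp add: sum_nonneg_eq_0_iff sum_nonneg)
  then show ?thesis using assms(1) unfolding QRE_def by simp
qed

end

section \<open>Orbits of the mean belief dynamics\<close>

locale mean_belief_orbit = coordination_game +
  fixes lam :: real and sigma2 :: state and mu :: "real \<Rightarrow> state"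
  assumes lam_nonneg: "0 \<le> lam"
    and sigma2_nonneg: "\<And>j s. j < n \<Longrightarrow> s < m j \<Longrightarrow> 0 \<le> sigma2 j s"
    and orbit: "hetero_orbit n m E A beta lam sigma2 mu"
    and initial: "mu 0 \<in> prod_simplex n m"
begin

definition correction :: "real \<Rightarrow> nat \<Rightarrow> nat \<Rightarrow> real" where
  "correction t i s = (\<Sum>j\<in>nbrs n E i. \<Sum>s'<m j.
       second_partial (logit n m E A beta i s) j s' (mu t) * ((lam + 1) / (lam + t + 1))\<^sup>2 * sigma2 j s')
     / (2 * (lam + t + 1))"

definition velocity :: "real \<Rightarrow> nat \<Rightarrow> nat \<Rightarrow> real" where
  "velocity t i s = (logit n m E A beta i s (mu t) - mu t i s) / (lam + t + 1) + correction t i s"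

definition correction_bound :: real where
  "correction_bound = 3 * beta\<^sup>2 * A_norm\<^sup>2 * (lam + 1)\<^sup>2 * (\<Sum>j<n. \<Sum>s'<m j. sigma2 j s')"

lemma correction_bound_nonneg: "0 \<le> correction_bound"
  unfolding correction_bound_def using sigma2_nonneg by (intro mult_nonneg_nonneg sum_nonneg) auto

lemma has_real_derivative_mu:
  "0 \<le> t \<Longrightarrow> i < n \<Longrightarrow> s < m i \<Longrightarrow>
     ((\<lambda>\<tau>. mu \<tau> i s) has_real_derivative velocity t i s) (at t within {0..})"
  using orbit unfolding hetero_orbit_def velocity_def correction_def by blast

lemma has_real_derivative_mu_at:
  assumes "0 < t" "i < n" "s < m i"
  shows "((\<lambda>\<tau>. mu \<tau> i s) has_real_derivative velocity t i s) (at t)"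
proof -
  have "at t within {0..} = at t" using assms(1) by (intro at_within_interior) auto
  then show ?thesis using has_real_derivative_mu[of t i s] assms by simp
qed

lemma sum_correction:
  assumes "i < n"
  shows "(\<Sum>s<m i. correction t i s) = 0"
proof -
  let ?q = "((lam + 1) / (lam + t + 1))\<^sup>2"
  have "(\<Sum>s<m i. \<Sum>j\<in>nbrs n E i. \<Sum>s'<m j.
          second_partial (logit n m E A beta i s) j s' (mu t) * ?q * sigma2 j s')
      = (\<Sum>j\<in>nbrs n E i. \<Sum>s'<m j.
          (\<Sum>s<m i. second_partial (logit n m E A beta i s) j s' (mu t)) * ?q * sigma2 j s')"
    unfolding sum_distrib_right by (subst sum.swap) (rule sum.cong[OF refl], rule sum.swap)
  also have "\<dots> = 0" using sum_second_partial_logit[OF assms] by simp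
  finally show ?thesis unfolding correction_def by (simp add: sum_divide_distrib[symmetric])
qed

lemma abs_correction_le:
  assumes "0 \<le> t" "i < n" "s < m i"
  shows "\<bar>correction t i s\<bar> \<le> correction_bound / (lam + t + 1) ^ 3"
proof -
  let ?q = "((lam + 1) / (lam + t + 1))\<^sup>2" and ?K = "6 * beta\<^sup>2 * A_norm\<^sup>2"
  have T: "0 < lam + t + 1" using assms(1) lam_nonneg by simp
  have "\<bar>\<Sum>j\<in>nbrs n E i. \<Sum>s'<m j. second_partial (logit n m E A beta i s) j s' (mu t) * ?q * sigma2 j s'\<bar>
      \<le> (\<Sum>j\<in>nbrs n E i. \<Sum>s'<m j. ?K * ?q * sigma2 j s')"
  proof (intro order.trans[OF sum_abs] sum_mono order.trans[OF sum_abs])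
    fix j s' assume "j \<in> nbrs n E i" "s' \<in> {..<m j}"
    then have "0 \<le> sigma2 j s'" using sigma2_nonneg by (auto dest: nbrs_less)
    then show "\<bar>second_partial (logit n m E A beta i s) j s' (mu t) * ?q * sigma2 j s'\<bar> \<le> ?K * ?q * sigma2 j s'"
      using abs_second_partial_logit_le[OF assms(2,3)] by (simp add: abs_mult mult_right_mono)
  qed
  also have "\<dots> \<le> ?K * ?q * (\<Sum>j<n. \<Sum>s'<m j. sigma2 j s')"
    unfolding sum_distrib_left[symmetric] using sigma2_nonneg
    by (intro mult_left_mono sum_mono2) (auto intro!: sum_nonneg dest: nbrs_less)
  finally have "\<bar>correction t i s\<bar> \<le> ?K * ?q * (\<Sum>j<n. \<Sum>s'<m j. sigma2 j s') / (2 * (lam + t + 1))"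
    unfolding correction_def using T by (simp add: abs_divide divide_right_mono)
  also have "\<dots> = correction_bound / (lam + t + 1) ^ 3"
  proof -
    have "6 * b * ((l + 1) / T)\<^sup>2 * S / (2 * T) = 3 * b * (l + 1)\<^sup>2 * S / T ^ 3" if "0 < T" for b l S T :: real
      using that by (simp add: power_divide power2_eq_square power3_eq_cube field_simps)
    from this[OF T, of "beta\<^sup>2 * A_norm\<^sup>2" lam "\<Sum>j<n. \<Sum>s'<m j. sigma2 j s'"] show ?thesis
      by (simp only: correction_bound_def mult.assoc)
  qed
  finally show ?thesis .
qed

lemma sum_mu: 
  assumes "0 \<le> t" "i < n"
  shows "(\<Sum>s<m i. mu t i s) = 1"
proof -
  let ?h = "\<lambda>\<tau>. ((\<Sum>s<m i. mu \<tau> i s) - 1) * (lam + \<tau> + 1)"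
  have "((\<Sum>s<m i. velocity \<tau> i s)) = (1 - (\<Sum>s<m i. mu \<tau> i s)) / (lam + \<tau> + 1)" for \<tau>
    unfolding velocity_def using sum_correction[OF assms(2)] sum_logit[OF assms(2)]
    by (simp add: sum.distrib sum_divide_distrib[symmetric] sum_subtractf)
  moreover have "(?h has_real_derivative
      ((\<Sum>s<m i. velocity \<tau> i s) - 0) * (lam + \<tau> + 1) + (0 + 1 + 0) * ((\<Sum>s<m i. mu \<tau> i s) - 1))
      (at \<tau> within {0..})" if "\<tau> \<in> {0..}" for \<tau>
    using that assms(2)
    by (intro DERIV_mult DERIV_diff DERIV_sum DERIV_const DERIV_add DERIV_ident has_real_derivative_mu) auto
  ultimately have "(?h has_real_derivative 0) (at \<tau> within {0..})" if "\<tau> \<in> {0..}" for \<tau>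
    using that lam_nonneg by force
  then obtain c where c: "\<And>\<tau>. \<tau> \<in> {0..} \<Longrightarrow> ?h \<tau> = c"
    using has_field_derivative_zero_constant[of "{0..}" ?h] by auto
  have "?h t = ?h 0" using c[of t] c[of 0] assms(1) by simp
  also have "?h 0 = 0" using initial assms(2) unfolding prod_simplex_def by simp
  finally show ?thesis using assms(1) lam_nonneg by simp
qed

lemma sum_velocity: "0 \<le> t \<Longrightarrow> i < n \<Longrightarrow> (\<Sum>s<m i. velocity t i s) = 0"
  unfolding velocity_def using sum_correction sum_logit sum_mu
  by (simp add: sum.distrib sum_divide_distrib[symmetric] sum_subtractf)

lemma has_real_derivative_scaled_mu:
  assumes "0 \<le> t" "i < n" "s < m i"
  shows "((\<lambda>\<tau>. mu \<tau> i s * (lam + \<tau> + 1)) has_real_derivative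
           logit n m E A beta i s (mu t) + correction t i s * (lam + t + 1)) (at t within {0..})"
proof -
  have "((\<lambda>\<tau>. mu \<tau> i s * (lam + \<tau> + 1)) has_real_derivative
      velocity t i s * (lam + t + 1) + (0 + 1 + 0) * mu t i s) (at t within {0..})"
    by (intro DERIV_mult has_real_derivative_mu assms DERIV_add DERIV_const DERIV_ident)
  moreover have "velocity t i s * (lam + t + 1) + (0 + 1 + 0) * mu t i s
      = logit n m E A beta i s (mu t) + correction t i s * (lam + t + 1)"
    using assms(1) lam_nonneg by (simp add: velocity_def field_simps)
  ultimately show ?thesis by simp
qed

lemma abs_scaled_correction_le:
  assumes "0 \<le> t" "i < n" "s < m i"
  shows "\<bar>correction t i s * (lam + t + 1)\<bar> \<le> correction_bound / (lam + t + 1)\<^sup>2"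
proof -
  have T: "0 < lam + t + 1" using assms(1) lam_nonneg by simp
  have "\<bar>correction t i s\<bar> * (lam + t + 1) \<le> correction_bound / (lam + t + 1) ^ 3 * (lam + t + 1)"
    using abs_correction_le[OF assms] T by (intro mult_right_mono) auto
  then show ?thesis using T by (simp add: abs_mult power2_eq_square power3_eq_cube)
qed

lemma has_real_derivative_correction_bound_div:
  "0 \<le> t \<Longrightarrow> ((\<lambda>\<tau>. correction_bound / (lam + \<tau> + 1)) has_real_derivative
     - correction_bound / (lam + t + 1)\<^sup>2) (at t within S)"
  using lam_nonneg by (auto intro!: derivative_eq_intros simp: power2_eq_square field_simps)

lemma scaled_mu_lower:
  assumes "0 \<le> t" "i < n" "s < m i"
    and logit_ge: "\<And>\<tau>. 0 \<le> \<tau> \<Longrightarrow> \<tau> \<le> t \<Longrightarrow> c \<le> logit n m E A beta i s (mu \<tau>)"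
  shows "mu 0 i s * (lam + 1) + c * t - correction_bound \<le> mu t i s * (lam + t + 1)"
proof -
  let ?g = "\<lambda>\<tau>. mu \<tau> i s * (lam + \<tau> + 1) - c * \<tau> - correction_bound / (lam + \<tau> + 1)"
  have "?g 0 \<le> ?g t"
  proof (rule nondecreasing_if_deriv_nonneg[OF assms(1)])
    fix \<tau> assume \<tau>: "0 \<le> \<tau>" "\<tau> \<le> t"
    show "(?g has_real_derivative logit n m E A beta i s (mu \<tau>) + correction \<tau> i s * (lam + \<tau> + 1)
        - c * 1 - (- correction_bound / (lam + \<tau> + 1)\<^sup>2)) (at \<tau> within {0..t})"
      using \<tau> assms(2,3)
      by (intro DERIV_diff DERIV_cmult DERIV_ident has_real_derivative_correction_bound_div
          DERIV_subset[OF has_real_derivative_scaled_mu]) auto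
    show "0 \<le> logit n m E A beta i s (mu \<tau>) + correction \<tau> i s * (lam + \<tau> + 1)
        - c * 1 - (- correction_bound / (lam + \<tau> + 1)\<^sup>2)"
      using abs_scaled_correction_le[OF \<tau>(1) assms(2,3)] logit_ge[OF \<tau>] by (simp add: abs_le_iff)
  qed
  moreover have "correction_bound / (lam + 1) \<le> correction_bound" "0 \<le> correction_bound / (lam + t + 1)"
    using correction_bound_nonneg lam_nonneg assms(1) by (simp_all add: divide_le_eq mult_le_cancel_left1)
  ultimately show ?thesis by simp
qed

lemma scaled_mu_upper:
  assumes "0 \<le> t" "i < n" "s < m i"
  shows "mu t i s * (lam + t + 1) \<le> mu 0 i s * (lam + 1) + t + correction_bound"
proof -
  let ?g = "\<lambda>\<tau>. \<tau> - mu \<tau> i s * (lam + \<tau> + 1) - correction_bound / (lam + \<tau> + 1)"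
  have "?g 0 \<le> ?g t"
  proof (rule nondecreasing_if_deriv_nonneg[OF assms(1)])
    fix \<tau> assume \<tau>: "0 \<le> \<tau>" "\<tau> \<le> t"
    show "(?g has_real_derivative 1 - (logit n m E A beta i s (mu \<tau>) + correction \<tau> i s * (lam + \<tau> + 1))
        - (- correction_bound / (lam + \<tau> + 1)\<^sup>2)) (at \<tau> within {0..t})"
      using \<tau> assms(2,3)
      by (intro DERIV_diff DERIV_ident has_real_derivative_correction_bound_div
          DERIV_subset[OF has_real_derivative_scaled_mu]) auto
    show "0 \<le> 1 - (logit n m E A beta i s (mu \<tau>) + correction \<tau> i s * (lam + \<tau> + 1))
        - (- correction_bound / (lam + \<tau> + 1)\<^sup>2)"
      using abs_scaled_correction_le[OF \<tau>(1) assms(2,3)] logit_le_1[OF assms(2,3), of "mu \<tau>"]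
      by (simp add: abs_le_iff)
  qed
  moreover have "correction_bound / (lam + 1) \<le> correction_bound" "0 \<le> correction_bound / (lam + t + 1)"
    using correction_bound_nonneg lam_nonneg assms(1) by (simp_all add: divide_le_eq mult_le_cancel_left1)
  ultimately show ?thesis by simp
qed

lemma abs_mu_le:
  assumes "0 \<le> t" "i < n" "s < m i"
  shows "\<bar>mu t i s\<bar> \<le> 1 + correction_bound"
proof -
  have T: "1 \<le> lam + t + 1" using assms(1) lam_nonneg by simp
  have "0 \<le> mu 0 i s * (lam + 1)" "mu 0 i s * (lam + 1) \<le> lam + 1"
    using prod_simplex_bounds[OF initial assms(2,3)] lam_nonneg by auto
  moreover have "0 \<le> logit n m E A beta i s (mu \<tau>)" for \<tau>
    using logit_pos[OF assms(2)] less_imp_le by blast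
  ultimately have lower: "- correction_bound \<le> mu t i s * (lam + t + 1)"
    and "mu t i s * (lam + t + 1) \<le> (lam + t + 1) + correction_bound"
    using scaled_mu_lower[OF assms, of 0] scaled_mu_upper[OF assms] by auto
  then have upper: "(mu t i s - 1) * (lam + t + 1) \<le> correction_bound"
    by (simp add: algebra_simps)
  have "- correction_bound \<le> mu t i s"
  proof (cases "0 \<le> mu t i s")
    case False
    then have "mu t i s * (lam + t + 1) \<le> mu t i s * 1" using T by (intro mult_left_mono_neg) auto
    then show ?thesis using lower by simp
  qed (use correction_bound_nonneg in simp)
  moreover have "mu t i s - 1 \<le> correction_bound"
    using upper mult_left_mono[OF T, of "mu t i s - 1"] correction_bound_nonneg
    by (cases "0 \<le> mu t i s - 1") auto
  ultimately show ?thesis by (simp add: abs_le_iff)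
qed

definition logit_floor :: real where
  "logit_floor = exp (- 2 * beta * A_norm * (1 + correction_bound)) / strategy_count"

lemma logit_floor_pos: "0 < logit_floor"
  unfolding logit_floor_def using strategy_count_ge_1 by simp

lemma logit_floor_le_logit:
  "0 \<le> t \<Longrightarrow> i < n \<Longrightarrow> s < m i \<Longrightarrow> logit_floor \<le> logit n m E A beta i s (mu t)"
  unfolding logit_floor_def by (rule logit_ge) (auto intro: abs_mu_le)

lemma logit_floor_le_1: "logit_floor \<le> 1"
  using logit_floor_le_logit[of 0 0 0] logit_le_1[of 0 0 "mu 0"] populations_nonempty strategies_nonempty
  by force

definition settling_time :: real where
  "settling_time = 2 * correction_bound / logit_floor + lam + 1"

lemma settling_time_pos: "0 < settling_time"
  unfolding settling_time_def using correction_bound_nonneg logit_floor_pos lam_nonneg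
  by (simp add: add_nonneg_pos)

lemma half_logit_floor_le_mu:
  assumes "settling_time \<le> t" "i < n" "s < m i"
  shows "logit_floor / 2 \<le> mu t i s"
proof -
  have t: "0 \<le> t" using assms(1) settling_time_pos by simp
  have "logit_floor * settling_time = 2 * correction_bound + logit_floor * (lam + 1)"
    unfolding settling_time_def using logit_floor_pos by (simp add: field_simps)
  then have "logit_floor / 2 * (lam + t + 1) \<le> logit_floor * t - correction_bound"
    using mult_left_mono[OF assms(1) less_imp_le[OF logit_floor_pos]] by (simp add: field_simps)
  also have "\<dots> \<le> mu t i s * (lam + t + 1)"
    using scaled_mu_lower[OF t assms(2,3) logit_floor_le_logit[OF _ assms(2,3)]]
      prod_simplex_bounds(1)[OF initial assms(2,3)] lam_nonneg
    by (smt (verit) mult_nonneg_nonneg)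
  finally show ?thesis using t lam_nonneg by (simp add: mult_le_cancel_right_pos)
qed

lemma mu_in_prod_simplex:
  assumes "settling_time \<le> t"
  shows "mu t \<in> prod_simplex n m"
proof -
  have "0 \<le> mu t i s" if "i < n" "s < m i" for i s
    using half_logit_floor_le_mu[OF assms that] logit_floor_pos by linarith
  moreover have "0 \<le> t" using assms settling_time_pos by simp
  ultimately show ?thesis unfolding prod_simplex_def using sum_mu by simp
qed

definition speed_bound :: real where
  "speed_bound = 2 + 2 * correction_bound"

lemma speed_bound_pos: "0 < speed_bound"
  unfolding speed_bound_def using correction_bound_nonneg by simp

lemma abs_velocity_le:
  assumes "0 \<le> t" "i < n" "s < m i"
  shows "\<bar>velocity t i s\<bar> \<le> speed_bound / (lam + t + 1)"
proof -
  have T: "1 \<le> lam + t + 1" using assms(1) lam_nonneg by simp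
  have "\<bar>logit n m E A beta i s (mu t) - mu t i s\<bar> \<le> 2 + correction_bound"
    using abs_mu_le[OF assms] logit_pos[OF assms(2), of s "mu t"] logit_le_1[OF assms(2,3), of "mu t"]
    by (simp add: abs_le_iff)
  moreover have "\<bar>correction t i s\<bar> \<le> correction_bound / (lam + t + 1)"
  proof -
    have "lam + t + 1 \<le> (lam + t + 1) ^ 3" using power_increasing[of 1 3 "lam + t + 1"] T by simp
    then show ?thesis
      using abs_correction_le[OF assms] correction_bound_nonneg T
      by (smt (verit) divide_left_mono mult_pos_pos zero_less_power)
  qed
  ultimately show ?thesis
    unfolding velocity_def speed_bound_def using T
    by (smt (verit) abs_divide abs_of_pos add_divide_distrib divide_right_mono)
qed

lemma mu_lipschitz:
  assumes "0 \<le> a" "a \<le> t" "i < n" "s < m i"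
  shows "\<bar>mu t i s - mu a i s\<bar> \<le> speed_bound * (t - a) / (lam + a + 1)"
proof -
  have Ta: "0 < lam + a + 1" using assms(1) lam_nonneg by simp
  have "norm (mu t i s - mu a i s) \<le> speed_bound / (lam + a + 1) * norm (t - a)"
  proof (rule field_differentiable_bound[where S = "{a..t}" and f' = "\<lambda>\<tau>. velocity \<tau> i s"])
    fix \<tau> assume \<tau>: "\<tau> \<in> {a..t}"
    then show "((\<lambda>\<tau>. mu \<tau> i s) has_field_derivative velocity \<tau> i s) (at \<tau> within {a..t})"
      using assms by (intro DERIV_subset[OF has_real_derivative_mu]) auto
    have "\<bar>velocity \<tau> i s\<bar> \<le> speed_bound / (lam + \<tau> + 1)"
      using \<tau> assms by (intro abs_velocity_le) auto
    also have "\<dots> \<le> speed_bound / (lam + a + 1)"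
      using \<tau> Ta correction_bound_nonneg unfolding speed_bound_def by (intro divide_left_mono) auto
    finally show "norm (velocity \<tau> i s) \<le> speed_bound / (lam + a + 1)" by simp
  qed (use assms in auto)
  then show ?thesis using assms(2) by simp
qed

section \<open>Convergence to the quantal response equilibria\<close>

definition log_floor :: real where
  "log_floor = - ln (logit_floor / 2)"

lemma log_floor_pos: "0 < log_floor"
  unfolding log_floor_def using logit_floor_pos logit_floor_le_1 by simp

lemma abs_ln_logit_diff_le:
  assumes "settling_time \<le> t" "i < n" "s < m i"
  shows "\<bar>ln (logit n m E A beta i s (mu t)) - ln (mu t i s)\<bar> \<le> log_floor"
proof -
  have t: "0 \<le> t" using assms(1) settling_time_pos by simp
  let ?c = "logit_floor / 2"
  have "?c \<le> logit n m E A beta i s (mu t)" "logit n m E A beta i s (mu t) \<le> 1"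
    using logit_floor_le_logit[OF t assms(2,3)] logit_floor_pos logit_le_1[OF assms(2,3)] by auto
  moreover have "?c \<le> mu t i s" "mu t i s \<le> 1"
    using half_logit_floor_le_mu[OF assms] prod_simplex_bounds(2)[OF mu_in_prod_simplex[OF assms(1)] assms(2,3)]
    by auto
  ultimately have "ln ?c \<le> ln (logit n m E A beta i s (mu t))" "ln (logit n m E A beta i s (mu t)) \<le> 0"
    "ln ?c \<le> ln (mu t i s)" "ln (mu t i s) \<le> 0"
    using logit_floor_pos by auto
  then show ?thesis unfolding log_floor_def by (simp add: abs_le_iff)
qed

lemma velocity_mult_ln_diff_ge:
  assumes "settling_time \<le> t" "i < n" "s < m i"
  shows "(logit n m E A beta i s (mu t) - mu t i s)\<^sup>2 / (lam + t + 1)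
           - correction_bound * log_floor / (lam + t + 1) ^ 3
         \<le> velocity t i s * (ln (logit n m E A beta i s (mu t)) - ln (mu t i s))"
proof -
  let ?f = "logit n m E A beta i s (mu t)" and ?x = "mu t i s"
  have t: "0 \<le> t" using assms(1) settling_time_pos by simp
  have T: "0 < lam + t + 1" using t lam_nonneg by simp
  have "(?f - ?x)\<^sup>2 / (lam + t + 1) \<le> (?f - ?x) * (ln ?f - ln ?x) / (lam + t + 1)"
    using sq_diff_le_diff_mult_ln_diff[of ?f ?x] logit_pos[OF assms(2)] logit_le_1[OF assms(2,3)]
      half_logit_floor_le_mu[OF assms] logit_floor_pos
      prod_simplex_bounds(2)[OF mu_in_prod_simplex[OF assms(1)] assms(2,3)] T
    by (intro divide_right_mono) auto
  moreover have "\<bar>correction t i s * (ln ?f - ln ?x)\<bar> \<le> correction_bound / (lam + t + 1) ^ 3 * log_floor"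
    unfolding abs_mult using abs_correction_le[OF t assms(2,3)] abs_ln_logit_diff_le[OF assms]
    by (intro mult_mono) auto
  ultimately show ?thesis
    unfolding velocity_def by (simp add: abs_le_iff algebra_simps)
qed

text \<open>The subtracted term decreases like \<open>(\<lambda> + t + 1)\<^sup>-\<^sup>2\<close>; its derivative compensates
  the contribution of the correction to the growth of the potential.\<close>

definition lyapunov :: "real \<Rightarrow> real" where
  "lyapunov t = potential (mu t)
     - strategy_count * correction_bound * log_floor / (2 * (lam + t + 1)\<^sup>2)"

definition lyapunov_rate :: "real \<Rightarrow> real" where
  "lyapunov_rate t =
     (\<Sum>i<n. \<Sum>s<m i. velocity t i s * (ln (logit n m E A beta i s (mu t)) - ln (mu t i s)))
     + strategy_count * correction_bound * log_floor / (lam + t + 1) ^ 3"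

lemma has_real_derivative_lyapunov:
  assumes "settling_time \<le> t"
  shows "(lyapunov has_real_derivative lyapunov_rate t) (at t)"
proof -
  let ?K = "strategy_count * correction_bound * log_floor"
  have t: "0 < t" using assms settling_time_pos by simp
  have T: "0 < lam + t + 1" using t lam_nonneg by simp
  have "0 < mu t i s" if "i < n" "s < m i" for i s
    using half_logit_floor_le_mu[OF assms that] logit_floor_pos by linarith
  then have "((\<lambda>\<tau>. potential (mu \<tau>)) has_real_derivative
      (\<Sum>i<n. \<Sum>s<m i. velocity t i s * (ln (logit n m E A beta i s (mu t)) - ln (mu t i s)))) (at t)"
    using has_real_derivative_mu_at[OF t] sum_velocity less_imp_le[OF t]
    by (intro has_real_derivative_potential) auto
  moreover have "((\<lambda>\<tau>. ?K / (2 * (lam + \<tau> + 1)\<^sup>2)) has_real_derivative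
      - ?K / (lam + t + 1) ^ 3 * (0 + 1 + 0)) (at t)"
  proof (rule DERIV_chain2[where f = "\<lambda>T. ?K / (2 * T\<^sup>2)"])
    show "((\<lambda>T. ?K / (2 * T\<^sup>2)) has_real_derivative - ?K / (lam + t + 1) ^ 3) (at (lam + t + 1))"
      using T by (rule has_real_derivative_half_inverse_square)
  qed (intro DERIV_add DERIV_const DERIV_ident)
  ultimately show ?thesis
    unfolding lyapunov_def[abs_def] lyapunov_rate_def using DERIV_diff by fastforce
qed

lemma logit_gap_le_lyapunov_rate:
  assumes "settling_time \<le> t"
  shows "logit_gap (mu t) / (lam + t + 1) \<le> lyapunov_rate t"
proof -
  have "logit_gap (mu t) / (lam + t + 1) - strategy_count * correction_bound * log_floor / (lam + t + 1) ^ 3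
      = (\<Sum>i<n. \<Sum>s<m i. (logit n m E A beta i s (mu t) - mu t i s)\<^sup>2 / (lam + t + 1)
           - correction_bound * log_floor / (lam + t + 1) ^ 3)"
    unfolding logit_gap_def strategy_count_def
    by (simp add: sum_subtractf sum_divide_distrib[symmetric] sum_distrib_right mult.assoc)
  also have "\<dots> \<le> (\<Sum>i<n. \<Sum>s<m i. velocity t i s * (ln (logit n m E A beta i s (mu t)) - ln (mu t i s)))"
    by (intro sum_mono velocity_mult_ln_diff_ge[OF assms]) auto
  finally show ?thesis unfolding lyapunov_rate_def by simp
qed
lemma lyapunov_le:
  assumes "settling_time \<le> t"
  shows "lyapunov t \<le> beta / 2 * (strategy_count * A_norm) + strategy_count"
proof -
  have in_simplex: "mu t \<in> prod_simplex n m" by (rule mu_in_prod_simplex[OF assms])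
  have "payoff_form (mu t) (mu t) \<le> (\<Sum>i<n. \<Sum>s<m i. A_norm)"
    unfolding payoff_form_def
  proof (intro sum_mono)
    fix i s assume "i \<in> {..<n}" "s \<in> {..<m i}"
    then have i: "i < n" "s < m i" by auto
    have bound: "\<bar>mu t j s'\<bar> \<le> 1" if "j < n" "s' < m j" for j s'
      using prod_simplex_bounds[OF in_simplex that] by simp
    then have "\<bar>mu t i s * payoff n m E A i s (mu t)\<bar> \<le> 1 * (A_norm * 1)"
      unfolding abs_mult using abs_payoff_le[OF i bound] i by (intro mult_mono) auto
    then show "mu t i s * payoff n m E A i s (mu t) \<le> A_norm" by simp
  qed
  also have "\<dots> = strategy_count * A_norm" unfolding strategy_count_def by (simp add: sum_distrib_right)
  finally have "beta / 2 * payoff_form (mu t) (mu t) \<le> beta / 2 * (strategy_count * A_norm)"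
    using beta_pos by (intro mult_left_mono) auto
  moreover have "- neg_entropy (mu t) \<le> strategy_count"
  proof -
    have "- neg_entropy (mu t) \<le> (\<Sum>i<n. \<Sum>s<m i. 1)"
      unfolding neg_entropy_def sum_negf[symmetric]
    proof (intro sum_mono)
      fix i s assume "i \<in> {..<n}" "s \<in> {..<m i}"
      then have "logit_floor / 2 \<le> mu t i s" using half_logit_floor_le_mu[OF assms, of i s] by simp
      then have "0 < mu t i s" using logit_floor_pos by linarith
      then show "- (mu t i s * ln (mu t i s)) \<le> 1" using x_ln_x_ge_minus_1 by simp
    qed
    then show ?thesis by (simp add: strategy_count_def)
  qed
  moreover have "0 \<le> strategy_count * correction_bound * log_floor / (2 * (lam + t + 1)\<^sup>2)"
    using strategy_count_ge_1 correction_bound_nonneg log_floor_pos by simp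
  ultimately show ?thesis unfolding lyapunov_def potential_def by linarith
qed

lemma lyapunov_log_growth:
  assumes "settling_time \<le> u" "u \<le> v"
    and gap: "\<And>\<tau>. u \<le> \<tau> \<Longrightarrow> \<tau> \<le> v \<Longrightarrow> e \<le> logit_gap (mu \<tau>)"
  shows "lyapunov u + e * (ln (lam + v + 1) - ln (lam + u + 1)) \<le> lyapunov v"
proof -
  have "lyapunov u - e * ln (lam + u + 1) \<le> lyapunov v - e * ln (lam + v + 1)"
  proof (rule nondecreasing_if_deriv_nonneg[OF assms(2)])
    fix \<tau> assume \<tau>: "u \<le> \<tau>" "\<tau> \<le> v"
    have T: "0 < lam + \<tau> + 1" using \<tau> assms(1) settling_time_pos lam_nonneg by simp
    have "((\<lambda>\<tau>. lyapunov \<tau> - e * ln (lam + \<tau> + 1)) has_real_derivative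
        lyapunov_rate \<tau> - e * (1 / (lam + \<tau> + 1))) (at \<tau>)"
      using has_real_derivative_lyapunov[of \<tau>] \<tau> assms(1) T by (auto intro!: derivative_eq_intros)
    then show "((\<lambda>\<tau>. lyapunov \<tau> - e * ln (lam + \<tau> + 1)) has_real_derivative
        lyapunov_rate \<tau> - e * (1 / (lam + \<tau> + 1))) (at \<tau> within {u..v})"
      by (rule has_field_derivative_at_within)
    have "e / (lam + \<tau> + 1) \<le> logit_gap (mu \<tau>) / (lam + \<tau> + 1)"
      using gap[OF \<tau>] T by (intro divide_right_mono) auto
    then show "0 \<le> lyapunov_rate \<tau> - e * (1 / (lam + \<tau> + 1))"
      using logit_gap_le_lyapunov_rate[of \<tau>] \<tau> assms(1) by simp
  qed
  then show ?thesis by (simp add: algebra_simps)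
qed

lemma lyapunov_mono: "settling_time \<le> u \<Longrightarrow> u \<le> v \<Longrightarrow> lyapunov u \<le> lyapunov v"
  using lyapunov_log_growth[of u v 0] logit_gap_nonneg by simp

lemma lyapunov_gain_on_window:
  assumes "settling_time \<le> u" "0 \<le> \<delta>"
    and gap: "\<And>\<tau>. u \<le> \<tau> \<Longrightarrow> \<tau> \<le> u + \<delta> * (lam + u + 1) \<Longrightarrow> e \<le> logit_gap (mu \<tau>)"
  shows "lyapunov u + e * ln (1 + \<delta>) \<le> lyapunov (u + \<delta> * (lam + u + 1))"
proof -
  let ?v = "u + \<delta> * (lam + u + 1)"
  have T: "0 < lam + u + 1" using assms(1) settling_time_pos lam_nonneg by simp
  then have "u \<le> ?v" using assms(2) by simp
  then have "lyapunov u + e * (ln (lam + ?v + 1) - ln (lam + u + 1)) \<le> lyapunov ?v"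
    by (rule lyapunov_log_growth[OF assms(1) _ gap])
  moreover have "lam + ?v + 1 = (1 + \<delta>) * (lam + u + 1)" by (simp add: algebra_simps)
  then have "ln (lam + ?v + 1) - ln (lam + u + 1) = ln (1 + \<delta>)"
    using T assms(2) by (simp add: ln_mult)
  ultimately show ?thesis by simp
qed

lemma mu_close_on_window:
  assumes "0 \<le> u" "u \<le> \<tau>" "\<tau> \<le> u + \<delta> * (lam + u + 1)" "i < n" "s < m i"
  shows "\<bar>mu \<tau> i s - mu u i s\<bar> \<le> speed_bound * \<delta>"
proof -
  have T: "0 < lam + u + 1" using assms(1) lam_nonneg by simp
  have "\<bar>mu \<tau> i s - mu u i s\<bar> \<le> speed_bound * (\<tau> - u) / (lam + u + 1)"
    using mu_lipschitz assms by simp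
  also have "\<dots> \<le> speed_bound * (\<delta> * (lam + u + 1)) / (lam + u + 1)"
    using assms T correction_bound_nonneg unfolding speed_bound_def
    by (intro divide_right_mono mult_left_mono) auto
  finally show ?thesis using T by simp
qed

lemma lyapunov_gain_near_point:
  assumes "settling_time \<le> u" "0 \<le> \<eta>"
    and near: "\<And>z. \<forall>i<n. \<forall>s<m i. \<bar>z i s - x i s\<bar> \<le> \<eta> \<Longrightarrow> e \<le> logit_gap z"
    and close: "\<And>i s. i < n \<Longrightarrow> s < m i \<Longrightarrow> \<bar>mu u i s - x i s\<bar> \<le> \<eta> / 2"
  shows "lyapunov u + e * ln (1 + \<eta> / (2 * speed_bound))
    \<le> lyapunov (u + \<eta> / (2 * speed_bound) * (lam + u + 1))"
proof (rule lyapunov_gain_on_window[OF assms(1)])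
  show "0 \<le> \<eta> / (2 * speed_bound)" using assms(2) speed_bound_pos by simp
  fix \<tau> assume \<tau>: "u \<le> \<tau>" "\<tau> \<le> u + \<eta> / (2 * speed_bound) * (lam + u + 1)"
  show "e \<le> logit_gap (mu \<tau>)"
  proof (rule near, intro allI impI)
    fix i s assume i: "i < n" "s < m i"
    have "0 \<le> u" using assms(1) settling_time_pos by simp
    have "\<bar>mu \<tau> i s - mu u i s\<bar> \<le> speed_bound * (\<eta> / (2 * speed_bound))"
      by (rule mu_close_on_window[OF \<open>0 \<le> u\<close> \<tau> i])
    moreover have "speed_bound * (\<eta> / (2 * speed_bound)) = \<eta> / 2" using speed_bound_pos by simp
    ultimately show "\<bar>mu \<tau> i s - x i s\<bar> \<le> \<eta>" using close[OF i] unfolding abs_le_iff by linarith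
  qed
qed

lemma limit_point_in_QRE:
  assumes late: "\<And>k. settling_time \<le> a k" and a_lim: "filterlim a at_top sequentially"
    and lim: "\<And>i s. i < n \<Longrightarrow> s < m i \<Longrightarrow> (\<lambda>k. mu (a k) i s) \<longlonglongrightarrow> x i s"
  shows "x \<in> QRE n m E A beta"
proof -
  have "x \<in> prod_simplex n m"
    using mu_in_prod_simplex[OF late] lim by (rule prod_simplex_limit)
  moreover have "logit_gap x = 0"
  proof (rule ccontr)
    assume "logit_gap x \<noteq> 0"
    define e where "e = logit_gap x / 2"
    have "0 < e" and e_less: "e < logit_gap x"
      unfolding e_def using \<open>logit_gap x \<noteq> 0\<close> logit_gap_nonneg[of x] by auto
    obtain \<eta> where "0 < \<eta>"
      and near: "\<And>z. \<forall>i<n. \<forall>s<m i. \<bar>z i s - x i s\<bar> \<le> \<eta> \<Longrightarrow> e \<le> logit_gap z"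
      using logit_gap_ge_near[OF e_less] by blast
    define \<delta> where "\<delta> = \<eta> / (2 * speed_bound)"
    have "0 < \<delta>" unfolding \<delta>_def using \<open>0 < \<eta>\<close> speed_bound_pos by simp
    then have "0 < e * ln (1 + \<delta>)" using \<open>0 < e\<close> by simp
    then obtain t\<^sub>0 where "settling_time \<le> t\<^sub>0"
      and small: "\<And>u v. t\<^sub>0 \<le> u \<Longrightarrow> u \<le> v \<Longrightarrow> lyapunov v < lyapunov u + e * ln (1 + \<delta>)"
      using eventually_small_increments_if_mono_bounded[of settling_time lyapunov, OF lyapunov_mono lyapunov_le]
      by blast
    have "0 < \<eta> / 2" using \<open>0 < \<eta>\<close> by simp
    with lim have "\<forall>\<^sub>F k in sequentially. \<forall>i<n. \<forall>s<m i. \<bar>mu (a k) i s - x i s\<bar> < \<eta> / 2"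
      by (rule eventually_coordinates_close)
    moreover have "\<forall>\<^sub>F k in sequentially. t\<^sub>0 \<le> a k"
      using a_lim by (simp add: filterlim_at_top)
    ultimately have "\<forall>\<^sub>F k in sequentially. t\<^sub>0 \<le> a k \<and> (\<forall>i<n. \<forall>s<m i. \<bar>mu (a k) i s - x i s\<bar> < \<eta> / 2)"
      by (simp add: eventually_conj_iff)
    then obtain k where "t\<^sub>0 \<le> a k"
      and close: "\<And>i s. i < n \<Longrightarrow> s < m i \<Longrightarrow> \<bar>mu (a k) i s - x i s\<bar> < \<eta> / 2"
      unfolding eventually_sequentially by auto
    have "lyapunov (a k) + e * ln (1 + \<delta>) \<le> lyapunov (a k + \<delta> * (lam + a k + 1))"
      unfolding \<delta>_def using late \<open>0 < \<eta>\<close> near close[THEN less_imp_le]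
      by (intro lyapunov_gain_near_point) auto
    moreover have "a k \<le> a k + \<delta> * (lam + a k + 1)"
      using \<open>0 < \<delta>\<close> late[of k] settling_time_pos lam_nonneg by simp
    ultimately show False using small[OF \<open>t\<^sub>0 \<le> a k\<close>] by fastforce
  qed
  ultimately show ?thesis by (rule QRE_if_logit_gap_eq_0)
qed

lemma sinfdist_QRE_tendsto_0: "((\<lambda>t. sinfdist n m (mu t) (QRE n m E A beta)) \<longlongrightarrow> 0) at_top"
proof (rule ccontr)
  let ?d = "\<lambda>t. sinfdist n m (mu t) (QRE n m E A beta)"
  assume "\<not> (?d \<longlongrightarrow> 0) at_top"
  then obtain \<epsilon> :: real where "0 < \<epsilon>" and "\<forall>N. \<exists>t\<ge>N. \<epsilon> \<le> \<bar>?d t\<bar>"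
    unfolding tendsto_iff eventually_at_top_linorder dist_real_def by (auto simp: not_less)
  then have "\<forall>k. \<exists>t. settling_time + real k \<le> t \<and> \<epsilon> \<le> \<bar>?d t\<bar>" by blast
  then obtain a where "\<forall>k. settling_time + real k \<le> a k \<and> \<epsilon> \<le> \<bar>?d (a k)\<bar>"
    by (auto dest: choice)
  then have late: "\<And>k. settling_time + real k \<le> a k" and far: "\<And>k. \<epsilon> \<le> \<bar>?d (a k)\<bar>"
    by auto
  have settled: "settling_time \<le> a k" for k using late[of k] by simp
  have "\<exists>r. strict_mono r \<and> (\<forall>p\<in>Sigma {..<n} (\<lambda>i. {..<m i}). convergent (\<lambda>k. mu (a (r k)) (fst p) (snd p)))"
    using prod_simplex_bounds[OF mu_in_prod_simplex[OF settled]]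
    by (intro bounded_family_convergent_subseq[where B = 1]) auto
  then obtain r where "strict_mono r"
    and conv: "\<And>i s. i < n \<Longrightarrow> s < m i \<Longrightarrow> convergent (\<lambda>k. mu (a (r k)) i s)"
    by fastforce
  define x where "x i s = lim (\<lambda>k. mu (a (r k)) i s)" for i s
  have lim: "(\<lambda>k. mu (a (r k)) i s) \<longlonglongrightarrow> x i s" if "i < n" "s < m i" for i s
    unfolding x_def using conv[OF that] by (simp add: convergent_LIMSEQ_iff)
  have "filterlim (\<lambda>k. a (r k)) at_top sequentially"
  proof (rule filterlim_at_top_mono[OF filterlim_real_sequentially always_eventually, rule_format])
    fix k
    show "real k \<le> a (r k)"
      using late[of "r k"] seq_suble[OF \<open>strict_mono r\<close>, of k] settling_time_pos by linarith
  qed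
  then have "x \<in> QRE n m E A beta"
    using settled lim by (intro limit_point_in_QRE) auto
  then have bound: "\<bar>?d (a (r k))\<bar> \<le> sdist n m (mu (a (r k))) x" for k
    using sinfdist_le_sdist[of x] sinfdist_nonneg[of "QRE n m E A beta"] by fastforce
  have "eventually (\<lambda>k. sdist n m (mu (a (r k))) x < \<epsilon>) sequentially"
    using sdist_tendsto_0[OF lim] \<open>0 < \<epsilon>\<close> by (rule order_tendstoD)
  then obtain k where "sdist n m (mu (a (r k))) x < \<epsilon>"
    unfolding eventually_sequentially by auto
  then show False using far[of "r k"] bound[of k] by linarith
qed

end

theorem theorem5:
  fixes n :: nat and m :: "nat \<Rightarrow> nat" and E :: "nat \<Rightarrow> nat \<Rightarrow> bool"
    and A :: "nat \<Rightarrow> nat \<Rightarrow> nat \<Rightarrow> nat \<Rightarrow> real" and beta lam :: real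
  assumes "simple_graph n E"
    and "\<forall>i<n. 0 < m i"
    and "coordination n m E A"
    and "star_forest n E"
    and "beta > 0" and "lam \<ge> 0"
  shows "(\<forall>mu. homog_orbit n m E A beta lam mu \<longrightarrow> mu 0 \<in> prod_simplex n m \<longrightarrow>
            ((\<lambda>t. sinfdist n m (mu t) (QRE n m E A beta)) \<longlongrightarrow> 0) at_top)
       \<and> (\<forall>sigma2 mu. (\<forall>j<n. \<forall>s<m j. 0 \<le> sigma2 j s) \<longrightarrow>
            hetero_orbit n m E A beta lam sigma2 mu \<longrightarrow> mu 0 \<in> prod_simplex n m \<longrightarrow>
            ((\<lambda>t. sinfdist n m (mu t) (QRE n m E A beta)) \<longlongrightarrow> 0) at_top)"
proof -
  have hetero: "((\<lambda>t. sinfdist n m (mu t) (QRE n m E A beta)) \<longlongrightarrow> 0) at_top"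
    if "\<forall>j<n. \<forall>s<m j. 0 \<le> sigma2 j s" "hetero_orbit n m E A beta lam sigma2 mu"
      "mu 0 \<in> prod_simplex n m" for sigma2 mu
  proof (cases "n = 0")
    case True
    then have "QRE n m E A beta = UNIV" "\<And>x y. sdist n m x y = 0"
      unfolding QRE_def prod_simplex_def sdist_def by auto
    then show ?thesis by (simp add: sinfdist_def)
  next
    case False
    interpret mean_belief_orbit n m E A beta lam sigma2 mu
      using assms that False by unfold_locales auto
    show ?thesis by (rule sinfdist_QRE_tendsto_0)
  qed
  moreover have "((\<lambda>t. sinfdist n m (mu t) (QRE n m E A beta)) \<longlongrightarrow> 0) at_top"
    if "homog_orbit n m E A beta lam mu" "mu 0 \<in> prod_simplex n m" for mu
    using that hetero[of "\<lambda>j s. 0" mu] unfolding homog_orbit_def hetero_orbit_def by simp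
  ultimately show ?thesis by blast
qed

end
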